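(* Let $a>0$. There exists $k_0=k_0(a)$ such that for all integers $k\ge k_0$, all positive integers $N>e^{ak}$, all $\delta\in(0,1/2)$ and all $x\in[e^{ak^2},N^k]$, \[ \#\mathcal{S}_k(N,\delta,x)\ge\Big(\big(\tfrac12-\delta\big)\big(2^{-1/k}-\tfrac32e^{-a}\big)-(2/3)^k\Big)x^{1/k}. \]
   Context: For $y\in\mathbb{R}$, $\|y\|$ denotes the distance from $y$ to the nearest integer. For positive integers $k,N$ and real $\delta,x\ge0$, $\mathcal{S}_k(N,\delta,x):=\{n\in\{1,\dots,N\} : \|x/n^k\|\ge\delta\}$. *)

theory Defs
  imports Complex_Main
begin

definition dist_nint :: "real \<Rightarrow> real" where
  "dist_nint y = (INF m\<in>(\<int>::real set). \<bar>y - m\<bar>)"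

definition S_set :: "nat \<Rightarrow> nat \<Rightarrow> real \<Rightarrow> real \<Rightarrow> nat set" where
  "S_set k N \<delta> x = {n \<in> {1..N}. dist_nint (x / real n ^ k) \<ge> \<delta>}"

end

theory Submission imports Defs begin

text \<open>Fix \<open>m \<ge> 1\<close>. Every \<open>n\<close> with \<open>m + \<delta> \<le> x / n^k \<le> m + 1 - \<delta>\<close> lies in \<open>S_k(N, \<delta>, x)\<close>, and these \<open>n\<close>
  form the integers of an interval of length \<open>X ((m + \<delta>)^r - (m + 1 - \<delta>)^r)\<close>, where
  \<open>X = x^(1/k)\<close> and \<open>r = -1/k\<close>. The bands for different \<open>m\<close> are disjoint. Since \<open>t^r\<close> is
  convex and decreasing, the drop of \<open>t^r\<close> over \<open>[m + \<delta>, m + 1 - \<delta>]\<close> is at least \<open>1 - 2\<delta>\<close>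
  times its drop over \<open>[m + 1, m + 2]\<close>, so summing over \<open>m = 1..M\<close> telescopes to
  \<open>#S \<ge> (1 - 2\<delta>) X (2^r - (M + 2)^r) - M\<close>. Taking \<open>M = \<lfloor>X (2/3)^k\<rfloor>\<close> and using
  \<open>x \<ge> e^(a k^2)\<close> gives \<open>(M + 2)^r \<le> (3/2) e^(-a)\<close>. So \<open>k\<^sub>0 = 1\<close> works, the factor \<open>1/2 - \<delta>\<close>
  can even be replaced by \<open>1 - 2\<delta>\<close>.\<close>

lemma dist_nint_ge_if_between:
  fixes m :: int and y \<delta> :: real
  assumes "m + \<delta> \<le> y" "y \<le> m + 1 - \<delta>"
  shows "\<delta> \<le> dist_nint y"
  unfolding dist_nint_def
proof (rule cINF_greatest)
  show "(\<int>::real set) \<noteq> {}" by auto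
next
  fix j :: real assume "j \<in> \<int>"
  then obtain i :: int where j: "j = of_int i" by (auto elim: Ints_cases)
  show "\<delta> \<le> \<bar>y - j\<bar>"
  proof (cases "i \<le> m")
    case True
    then have "real_of_int i \<le> real_of_int m" by simp
    then show ?thesis using assms j by linarith
  next
    case False
    then have "real_of_int i \<ge> real_of_int m + 1" by simp
    then show ?thesis using assms j by linarith
  qed
qed

lemma card_nat_between_ge:
  fixes A B :: real
  assumes "0 \<le> A"
  shows "B - A - 1 \<le> real (card {n::nat. A \<le> real n \<and> real n \<le> B})"
proof (cases "B < 0")
  case True
  then show ?thesis using assms by simp
next
  case False
  have "{n::nat. A \<le> real n \<and> real n \<le> B} = {nat \<lceil>A\<rceil>..nat \<lfloor>B\<rfloor>}"
  proof (rule set_eqI)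
    fix n :: nat
    have "A \<le> real n \<longleftrightarrow> nat \<lceil>A\<rceil> \<le> n"
      by (metis ceiling_le_iff nat_le_iff of_int_of_nat_eq of_nat_le_iff)
    moreover have "real n \<le> B \<longleftrightarrow> n \<le> nat \<lfloor>B\<rfloor>" using False
      by (metis le_floor_iff le_nat_iff not_less of_int_0_le_iff of_int_of_nat_eq zero_le_floor)
    ultimately show "n \<in> {n. A \<le> real n \<and> real n \<le> B} \<longleftrightarrow> n \<in> {nat \<lceil>A\<rceil>..nat \<lfloor>B\<rfloor>}"
      by auto
  qed
  moreover have "B - A - 1 \<le> real (nat \<lfloor>B\<rfloor> + 1 - nat \<lceil>A\<rceil>)"
    using False assms by linarith
  ultimately show ?thesis by simp
qed

lemma powr_inner_drop_ge:
  fixes m \<delta> r :: real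
  assumes "0 \<le> m" "0 < \<delta>" "\<delta> < 1/2" "r \<le> 0"
  shows "(1 - 2*\<delta>) * ((m + 1) powr r - (m + 2) powr r) \<le> (m + \<delta>) powr r - (m + 1 - \<delta>) powr r"
proof -
  have der: "\<And>t. 0 < t \<Longrightarrow> DERIV (\<lambda>z. z powr r) t :> r * t powr (r - 1)"
    by (rule has_real_derivative_powr)
  obtain z1 where z1: "m + \<delta> < z1" "z1 < m + 1 - \<delta>"
    "(m + 1 - \<delta>) powr r - (m + \<delta>) powr r = (1 - 2*\<delta>) * (r * z1 powr (r - 1))"
    using MVT2[of "m + \<delta>" "m + 1 - \<delta>" "\<lambda>z. z powr r" "\<lambda>t. r * t powr (r - 1)"] der assms
    by (force simp: algebra_simps)
  obtain z2 where z2: "m + 1 < z2" "z2 < m + 2"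
    "(m + 2) powr r - (m + 1) powr r = r * z2 powr (r - 1)"
    using MVT2[of "m + 1" "m + 2" "\<lambda>z. z powr r" "\<lambda>t. r * t powr (r - 1)"] der assms
    by force
  \<comment> \<open>the derivative \<open>r t^(r-1)\<close> is increasing, and \<open>z1 < z2\<close>\<close>
  have "z2 powr (r - 1) \<le> z1 powr (r - 1)"
    by (rule powr_mono2') (use assms z1 z2 in auto)
  then have "(1 - 2*\<delta>) * (-r * z2 powr (r - 1)) \<le> (1 - 2*\<delta>) * (-r * z1 powr (r - 1))"
    using assms by (intro mult_left_mono) auto
  then show ?thesis using z1(3) z2(3) by (simp add: algebra_simps)
qed

lemma sum_powr_inner_drop_ge:
  fixes \<delta> r :: real
  assumes "0 < \<delta>" "\<delta> < 1/2" "r \<le> 0"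
  shows "(1 - 2*\<delta>) * (2 powr r - (real M + 2) powr r)
           \<le> (\<Sum>m=1..M. (real m + \<delta>) powr r - (real m + 1 - \<delta>) powr r)"
proof (induction M)
  case 0
  then show ?case by simp
next
  case (Suc M)
  have "(1 - 2*\<delta>) * (2 powr r - (real (Suc M) + 2) powr r)
      = (1 - 2*\<delta>) * (2 powr r - (real M + 2) powr r)
        + (1 - 2*\<delta>) * ((real (Suc M) + 1) powr r - (real (Suc M) + 2) powr r)"
    by (simp add: algebra_simps)
  also have "\<dots> \<le> (\<Sum>m=1..M. (real m + \<delta>) powr r - (real m + 1 - \<delta>) powr r)
                 + ((real (Suc M) + \<delta>) powr r - (real (Suc M) + 1 - \<delta>) powr r)"
    using Suc powr_inner_drop_ge[of "real (Suc M)" \<delta> r] assms by (intro add_mono) auto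
  finally show ?case by simp
qed

lemma powr_inverse_power:
  fixes y :: real
  assumes "0 \<le> y" "0 < k"
  shows "(y powr (1 / real k)) ^ k = y"
  using assms by (simp flip: root_powr_inverse)

definition quotient_band :: "nat \<Rightarrow> real \<Rightarrow> real \<Rightarrow> nat \<Rightarrow> nat set" where
  "quotient_band k x \<delta> m = {n. real m + \<delta> \<le> x / real n ^ k \<and> x / real n ^ k \<le> real m + 1 - \<delta>}"

lemma quotient_band_subset_S_set:
  assumes "1 \<le> m" "0 \<le> \<delta>" "0 < k" "x \<le> real N ^ k"
  shows "quotient_band k x \<delta> m \<subseteq> S_set k N \<delta> x"
proof
  fix n assume n: "n \<in> quotient_band k x \<delta> m"
  then have q: "real m + \<delta> \<le> x / real n ^ k" "x / real n ^ k \<le> real m + 1 - \<delta>"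
    by (auto simp: quotient_band_def)
  then have "1 \<le> x / real n ^ k" using assms by linarith
  then have "0 < n"
    using \<open>0 < k\<close> by (cases n) (auto simp: power_0_left)
  then have "real n ^ k \<le> x"
    using \<open>1 \<le> x / real n ^ k\<close> by (simp add: le_divide_eq)
  then have "real n ^ k \<le> real N ^ k" using assms by linarith
  then have "n \<le> N"
    using \<open>0 < k\<close> by (metis power_mono_iff of_nat_0_le_iff of_nat_le_iff)
  moreover have "\<delta> \<le> dist_nint (x / real n ^ k)"
    using dist_nint_ge_if_between[of "int m"] q by simp
  ultimately show "n \<in> S_set k N \<delta> x"
    using \<open>0 < n\<close> by (simp add: S_set_def)
qed

lemma quotient_band_disjoint:
  assumes "0 < \<delta>" "i \<noteq> j"
  shows "quotient_band k x \<delta> i \<inter> quotient_band k x \<delta> j = {}"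
  using assms by (auto simp: quotient_band_def)

lemma quotient_band_eq_interval:
  assumes "0 < k" "0 < x" "0 < \<delta>" "\<delta> < 1"
  shows "quotient_band k x \<delta> m = {n. (x / (real m + 1 - \<delta>)) powr (1 / real k) \<le> real n
                                     \<and> real n \<le> (x / (real m + \<delta>)) powr (1 / real k)}"
proof (rule set_eqI)
  fix n :: nat
  show "n \<in> quotient_band k x \<delta> m \<longleftrightarrow> n \<in> {n. (x / (real m + 1 - \<delta>)) powr (1 / real k) \<le> real n
                                          \<and> real n \<le> (x / (real m + \<delta>)) powr (1 / real k)}"
  proof (cases "n = 0")
    case True
    then show ?thesis using assms by (simp add: quotient_band_def power_0_left)
  next
    case False
    let ?lo = "x / (real m + 1 - \<delta>)" and ?hi = "x / (real m + \<delta>)"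
    have pos: "0 < real n ^ k" "0 < ?lo" "0 < ?hi" using False assms by auto
    have "real m + \<delta> \<le> x / real n ^ k \<longleftrightarrow> real n ^ k \<le> ?hi"
      using pos assms by (simp add: le_divide_eq divide_le_eq mult.commute)
    also have "\<dots> \<longleftrightarrow> real n \<le> ?hi powr (1 / real k)"
      using power_mono_iff[of "real n" "?hi powr (1 / real k)" k] pos assms
      by (simp add: powr_inverse_power)
    finally have hi: "real m + \<delta> \<le> x / real n ^ k \<longleftrightarrow> real n \<le> ?hi powr (1 / real k)" .
    have "x / real n ^ k \<le> real m + 1 - \<delta> \<longleftrightarrow> ?lo \<le> real n ^ k"
      using pos assms by (simp add: le_divide_eq divide_le_eq mult.commute)
    also have "\<dots> \<longleftrightarrow> ?lo powr (1 / real k) \<le> real n"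
      using power_mono_iff[of "?lo powr (1 / real k)" "real n" k] pos assms
      by (simp add: powr_inverse_power)
    finally have lo: "x / real n ^ k \<le> real m + 1 - \<delta> \<longleftrightarrow> ?lo powr (1 / real k) \<le> real n" .
    show ?thesis using hi lo by (auto simp: quotient_band_def)
  qed
qed

lemma card_quotient_band_ge:
  assumes "0 < k" "0 < x" "0 < \<delta>" "\<delta> < 1"
  shows "x powr (1 / real k) * ((real m + \<delta>) powr (-1 / real k) - (real m + 1 - \<delta>) powr (-1 / real k)) - 1
           \<le> real (card (quotient_band k x \<delta> m))"
proof -
  have split: "(x / c) powr (1 / real k) = x powr (1 / real k) * c powr (-1 / real k)" if "0 < c" for c
    using that assms by (simp add: powr_divide powr_minus_divide)
  show ?thesis
    using card_nat_between_ge[of "(x / (real m + 1 - \<delta>)) powr (1 / real k)" "(x / (real m + \<delta>)) powr (1 / real k)"]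
      assms
    by (simp add: quotient_band_eq_interval split right_diff_distrib)
qed

lemma card_S_set_ge_bands:
  assumes "0 < k" "0 < \<delta>" "\<delta> < 1/2" "0 < x" "x \<le> real N ^ k"
  shows "(1 - 2*\<delta>) * x powr (1 / real k) * (2 powr (-1 / real k) - (real M + 2) powr (-1 / real k)) - real M
           \<le> real (card (S_set k N \<delta> x))"
proof -
  let ?X = "x powr (1 / real k)" and ?r = "-1 / real k" and ?B = "quotient_band k x \<delta>"
  let ?drop = "\<lambda>m::nat. (real m + \<delta>) powr ?r - (real m + 1 - \<delta>) powr ?r"
  have sub: "(\<Union>m\<in>{1..M}. ?B m) \<subseteq> S_set k N \<delta> x"
    using assms by (intro UN_least quotient_band_subset_S_set) auto
  have finS: "finite (S_set k N \<delta> x)" by (simp add: S_set_def)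
  have "(1 - 2*\<delta>) * ?X * (2 powr ?r - (real M + 2) powr ?r) - real M \<le> ?X * (\<Sum>m=1..M. ?drop m) - real M"
    using mult_left_mono[OF sum_powr_inner_drop_ge[of \<delta> ?r M], of ?X] assms by (simp add: mult_ac)
  also have "\<dots> = (\<Sum>m=1..M. ?X * ?drop m - 1)"
    by (simp add: sum_subtractf sum_distrib_left[symmetric])
  also have "\<dots> \<le> (\<Sum>m=1..M. real (card (?B m)))"
    using assms by (intro sum_mono card_quotient_band_ge) auto
  also have "\<dots> = real (card (\<Union>m\<in>{1..M}. ?B m))"
  proof -
    have "finite (?B m)" if "m \<in> {1..M}" for m
      using sub that finS by (meson UN_upper finite_subset subset_trans)
    then show ?thesis
      using card_UN_disjoint[of "{1..M}" ?B] quotient_band_disjoint[OF \<open>0 < \<delta>\<close>] by simp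
  qed
  also have "\<dots> \<le> real (card (S_set k N \<delta> x))"
    using card_mono[OF finS sub] by simp
  finally show ?thesis .
qed

lemma powr_floor_shift_le:
  assumes "0 < k" "exp (a * real k ^ 2) \<le> x"
  shows "(real (nat \<lfloor>x powr (1 / real k) * (2/3) ^ k\<rfloor>) + 2) powr (-1 / real k) \<le> 3/2 * exp (-a)"
proof -
  let ?X = "x powr (1 / real k)" and ?r = "-1 / real k"
  have "0 < x" using assms(2) by (meson exp_gt_zero less_le_trans)
  then have Y: "0 < ?X * (2/3) ^ k" by simp
  have "?X powr ?r = x powr (-1 / real k ^ 2)"
    by (simp add: powr_powr power2_eq_square)
  also have "\<dots> \<le> exp (a * real k ^ 2) powr (-1 / real k ^ 2)"
    by (rule powr_mono2') (use assms in auto)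
  also have "\<dots> = exp (-a)"
    using assms by (simp add: powr_def)
  finally have X_powr: "?X powr ?r \<le> exp (-a)" .
  have "?X * (2/3) ^ k \<le> real (nat \<lfloor>?X * (2/3) ^ k\<rfloor>) + 2"
    using Y by linarith
  then have "(real (nat \<lfloor>?X * (2/3) ^ k\<rfloor>) + 2) powr ?r \<le> (?X * (2/3) ^ k) powr ?r"
    using Y by (intro powr_mono2') auto
  also have "\<dots> = ?X powr ?r * ((2/3) powr real k) powr ?r"
    using Y by (simp add: powr_mult powr_realpow)
  also have "\<dots> = ?X powr ?r * (3/2)"
    using assms by (simp add: powr_powr powr_minus_divide)
  also have "\<dots> \<le> 3/2 * exp (-a)"
    using X_powr by simp
  finally show ?thesis .
qed

lemma card_S_set_ge:
  assumes "0 < k" "0 < \<delta>" "\<delta> < 1/2" "exp (a * real k ^ 2) \<le> x" "x \<le> real N ^ k"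
  shows "x powr (1 / real k) * ((1 - 2*\<delta>) * (2 powr (-1 / real k) - 3/2 * exp (-a)) - (2/3) ^ k)
           \<le> real (card (S_set k N \<delta> x))"
proof -
  let ?X = "x powr (1 / real k)" and ?r = "-1 / real k"
  define M where "M = nat \<lfloor>?X * (2/3) ^ k\<rfloor>"
  have "0 < x" using assms by (meson exp_gt_zero less_le_trans)
  then have "real M \<le> ?X * (2/3) ^ k" by (simp add: M_def)
  moreover have "(real M + 2) powr ?r \<le> 3/2 * exp (-a)"
    using powr_floor_shift_le[of k a x] assms by (simp add: M_def)
  then have "(1 - 2*\<delta>) * ?X * (2 powr ?r - 3/2 * exp (-a)) \<le> (1 - 2*\<delta>) * ?X * (2 powr ?r - (real M + 2) powr ?r)"
    using assms by (intro mult_left_mono) auto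
  moreover have "?X * ((1 - 2*\<delta>) * (2 powr ?r - 3/2 * exp (-a)) - (2/3) ^ k)
                   = (1 - 2*\<delta>) * ?X * (2 powr ?r - 3/2 * exp (-a)) - ?X * (2/3) ^ k"
    by (simp only: right_diff_distrib[of ?X] mult.left_commute[of ?X] mult.assoc)
  ultimately show ?thesis
    using card_S_set_ge_bands[of k \<delta> x N M] \<open>0 < x\<close> assms by linarith
qed

theorem lemma3p6:
  fixes a :: real
  assumes "a > 0"
  shows "\<exists>k0::nat. \<forall>k::nat. \<forall>N::nat. \<forall>\<delta>::real. \<forall>x::real.
           k \<ge> k0 \<longrightarrow> k \<ge> 1 \<longrightarrow> real N > exp (a * real k) \<longrightarrow>
           0 < \<delta> \<longrightarrow> \<delta> < 1/2 \<longrightarrow>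
           exp (a * real k ^ 2) \<le> x \<longrightarrow> x \<le> real N ^ k \<longrightarrow>
           real (card (S_set k N \<delta> x)) \<ge>
             ((1/2 - \<delta>) * (2 powr (-1 / real k) - 3/2 * exp (-a)) - (2/3) ^ k) * x powr (1 / real k)"
proof (intro exI[of _ 1] allI impI)
  fix k N :: nat and \<delta> x :: real
  assume "1 \<le> k" "1 \<le> k" "exp (a * real k) < real N" "0 < \<delta>" "\<delta> < 1/2"
    "exp (a * real k ^ 2) \<le> x" "x \<le> real N ^ k"
  note hyps = this
  define X where "X = x powr (1 / real k)"
  define P where "P = 2 powr (-1 / real k) - 3/2 * exp (-a)"
  have "0 \<le> X" by (simp add: X_def)
  have "X * ((1/2 - \<delta>) * P - (2/3) ^ k) \<le> max 0 (X * ((1 - 2*\<delta>) * P - (2/3) ^ k))"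
  proof (cases "0 \<le> P")
    case True
    then have "(1/2 - \<delta>) * P \<le> (1 - 2*\<delta>) * P" using hyps by (intro mult_right_mono) auto
    then have "X * ((1/2 - \<delta>) * P - (2/3) ^ k) \<le> X * ((1 - 2*\<delta>) * P - (2/3) ^ k)"
      using \<open>0 \<le> X\<close> by (intro mult_left_mono) auto
    then show ?thesis by simp
  next
    case False
    then have "(1/2 - \<delta>) * P \<le> 0" using hyps by (intro mult_nonneg_nonpos) auto
    then have "(1/2 - \<delta>) * P - (2/3) ^ k \<le> 0" using zero_le_power[of "2/3::real" k] by linarith
    then show ?thesis using \<open>0 \<le> X\<close> by (simp add: le_max_iff_disj mult_nonneg_nonpos)
  qed
  then show "((1/2 - \<delta>) * P - (2/3) ^ k) * X \<le> real (card (S_set k N \<delta> x))"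
    using card_S_set_ge[of k \<delta> a x N] hyps by (simp add: X_def P_def mult.commute)
qed

end
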